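(* Let $\mathbb{T}$ be the $m$-regular tree, and let $L_1$, $L_2$ be the averaging operators on $\mathbb{T}$ with parameters $\beta_1,\beta_2\in[0,1]$ respectively. Let $h_1,h_2:\mathbb{T}\to\mathbb{R}$ and let $f,g:[0,1]\to\mathbb{R}$ be continuous with $f(s)>g(s)$ for all $s\in[0,1]$. Assume that $0\le \beta_1<\tfrac12$, $0\le\beta_2<\tfrac12$, that the series defining $S^{\beta_1}_{h_1}(x)$ and $S^{\beta_2}_{h_2}(x)$ converge for every $x\in\mathbb{T}$, and that for $i=1,2$ $$\lim_{k\to\infty}\ \sup_{x\in\mathbb{T},\,|x|=k}\ \Big|\sum_{j=1}^{k}\Big(\frac{\beta_i}{1-\beta_i}\Big)^{k-j} S^{\beta_i}_{h_i}(x^j)\Big| = 0 .$$ Then there exists a pair of functions $u,v:\mathbb{T}\to\mathbb{R}$ solving the two membranes problem, i.e. $$\max\big\{-L_1(u)(x)+h_1(x),\ v(x)-u(x)\big\}=0,\qquad \min\big\{-L_2(v)(x)+h_2(x),\ u(x)-v(x)\big\}=0\qquad\text{for all }x\in\mathbb{T},$$ with $u|_{\partial\mathbb{T}}=f$ and $v|_{\partial\mathbb{T}}=g$. Moreover, the coincidence set $\{x\in\mathbb{T}: u(x)=v(x)\}$ of this solution is finite.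
   Context: The $m$-regular tree $\mathbb{T}$ ($m\ge 2$): its nodes are the root $\emptyset$ and all finite tuples $x=(a_1,\dots,a_k)$ with $a_i\in\{0,\dots,m-1\}$; $|x|=k$ is the level of $x$ ($|\emptyset|=0$). For $x\neq\emptyset$, $\hat x$ denotes its predecessor (delete the last entry). $S^l(x)$ is the set of the $m^l$ successors of $x$ at level $|x|+l$ (tuples extending $x$ by $l$ entries), $S^0(x)=\{x\}$. For $|x|=k$ and $1\le j\le k$, $x^j$ is the predecessor of $x$ at level $j$ (so $x^k=x$). A branch $z$ is an infinite sequence $(a_1,a_2,\dots)$, equivalently the sequence of nodes $z_n=(a_1,\dots,a_n)$; $\partial\mathbb{T}$ is the set of branches, and $\psi(z)=\sum_{k\ge1}a_k m^{-k}\in[0,1]$. A branch $z$ passes through $x$ if $x=z_{|x|}$. Averaging operator with parameter $\beta\in[0,1]$: for $u:\mathbb{T}\to\mathbb{R}$, $L(u)(x)=u(x)-\beta u(\hat x)-(1-\beta)\frac1m\sum_{y\in S^1(x)}u(y)$ for $x\ne\emptyset$, and $L(u)(\emptyset)=u(\emptyset)-\frac1m\sum_{y\in S^1(\emptyset)}u(y)$. Boundary condition: $u|_{\partial\mathbb{T}}=f$ means the uniform limit: for every $\varepsilon>0$ there is $K$ such that $|u(x)-f(\psi(z))|<\varepsilon$ for every node $x$ with $|x|\ge K$ and every branch $z$ passing through $x$. For $\beta\in[0,1)$ and $h:\mathbb{T}\to\mathbb{R}$, $S^\beta_h(x)=\sum_{i=1}^\infty\sum_{j=0}^{i-1}\frac{\beta^{i-j-1}}{(1-\beta)^{i-j}}\,\frac{1}{m^j}\sum_{y\in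 S^j(x)}h(y)$ (for $\beta>0$ this equals $\frac1\beta\sum_{i\ge1}\sum_{j=0}^{i-1}(\frac{\beta}{1-\beta})^{i-j}m^{-j}\sum_{y\in S^j(x)}h(y)$). The convention $0^0=1$ is used. *)

theory Defs
  imports "HOL-Analysis.Analysis"
begin

text \<open>The m-regular tree: nodes are finite lists over {0..<m}; the list
[a1,...,ak] is the node (a1,...,ak), its length is the level.\<close>

definition tnodes :: "nat \<Rightarrow> nat list set" where
  "tnodes m = {x. set x \<subseteq> {..<m}}"

definition succs :: "nat \<Rightarrow> nat \<Rightarrow> nat list \<Rightarrow> nat list set" where
  "succs m l x = {x @ ys | ys. length ys = l \<and> set ys \<subseteq> {..<m}}"

definition pred_node :: "nat list \<Rightarrow> nat list" where
  "pred_node x = butlast x"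

definition anc :: "nat list \<Rightarrow> nat \<Rightarrow> nat list" where
  "anc x j = take j x"

definition avg_op :: "nat \<Rightarrow> real \<Rightarrow> (nat list \<Rightarrow> real) \<Rightarrow> nat list \<Rightarrow> real" where
  "avg_op m \<beta> u x =
     (if x = [] then u [] - (1 / real m) * (\<Sum>y\<in>succs m 1 []. u y)
      else u x - \<beta> * u (pred_node x) - (1 - \<beta>) * (1 / real m) * (\<Sum>y\<in>succs m 1 x. u y))"

text \<open>Branches: infinite sequences (a1,a2,...) encoded as z with a_k = z (k-1).\<close>
definition branches :: "nat \<Rightarrow> (nat \<Rightarrow> nat) set" where
  "branches m = {z. \<forall>k. z k < m}"

definition psi :: "nat \<Rightarrow> (nat \<Rightarrow> nat) \<Rightarrow> real" where
  "psi m z = (\<Sum>k. real (z k) / real m ^ (Suc k))"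

definition passes :: "(nat \<Rightarrow> nat) \<Rightarrow> nat list \<Rightarrow> bool" where
  "passes z x \<longleftrightarrow> x = map z [0..<length x]"

definition boundary_val :: "nat \<Rightarrow> (nat list \<Rightarrow> real) \<Rightarrow> (real \<Rightarrow> real) \<Rightarrow> bool" where
  "boundary_val m u f \<longleftrightarrow>
     (\<forall>\<epsilon>>0. \<exists>K. \<forall>x\<in>tnodes m. length x \<ge> K \<longrightarrow>
        (\<forall>z\<in>branches m. passes z x \<longrightarrow> \<bar>u x - f (psi m z)\<bar> < \<epsilon>))"

text \<open>The i-th term (i >= 1) of the series defining S^beta_h(x).\<close>
definition S_term :: "nat \<Rightarrow> real \<Rightarrow> (nat list \<Rightarrow> real) \<Rightarrow> nat list \<Rightarrow> nat \<Rightarrow> real" where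
  "S_term m \<beta> h x i =
     (\<Sum>j<i. \<beta> ^ (i - j - 1) / (1 - \<beta>) ^ (i - j) * (1 / real m ^ j) * (\<Sum>y\<in>succs m j x. h y))"

definition S_conv :: "nat \<Rightarrow> real \<Rightarrow> (nat list \<Rightarrow> real) \<Rightarrow> nat list \<Rightarrow> bool" where
  "S_conv m \<beta> h x \<longleftrightarrow> summable (\<lambda>n. S_term m \<beta> h x (Suc n))"

definition S_op :: "nat \<Rightarrow> real \<Rightarrow> (nat list \<Rightarrow> real) \<Rightarrow> nat list \<Rightarrow> real" where
  "S_op m \<beta> h x = (\<Sum>n. S_term m \<beta> h x (Suc n))"

end

theory Submission
  imports Defs
begin

(* Write r = beta / (1 - beta), so that (1 - beta) (1 - r) = 1 - 2 beta. Off the root, the path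
   potential W x = a r^|x| + (1 - r) sum_j r^(|x| - j) S (x^j) satisfies
   L W = (1 - 2 beta) (S - mean of S over the children of x), and the constant a takes care of
   the root. For S = S^beta_h + F, where F x is the mean of f over the m-adic interval of x, the
   series defining S^beta_h gives S^beta_h - (children mean) = h / (1 - 2 beta), and F equals its
   children mean by additivity of the integral; so W solves L W = h. The path average of F tends
   to f at the boundary, and by the decay hypothesis on the sums of S^beta_h so does W. This
   gives solutions U and V of the Dirichlet problems for (L_1, h_1, f) and (L_2, h_2, g).
   Take v = V and let u be the least supersolution of L_1 lying above U and V (Perron's method);
   minimality gives the complementarity conditions. Since f > g, V < U <= u at all levels from
   some K on, so u = v only at the finitely many nodes of level below K. The barrier
   U + t rho^|x|, with r <= rho < 1 and t large, is a supersolution above V, so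
   U <= u <= U + t rho^|x| and u has the boundary values f of U. *)

section \<open>The tree and the averaging operator\<close>

lemma succs_0: "succs m 0 x = {x}"
  by (auto simp: succs_def)

lemma succs_Suc: "succs m (Suc j) x = (\<Union>c<m. succs m j (x @ [c]))"
  by (auto simp: succs_def length_Suc_conv)

lemma finite_succs: "finite (succs m j x)"
proof -
  have "succs m j x = (\<lambda>ys. x @ ys) ` {ys. set ys \<subseteq> {..<m} \<and> length ys = j}"
    by (auto simp: succs_def)
  then show ?thesis
    by (simp add: finite_lists_length_eq)
qed

lemma sum_succs_Suc: "sum h (succs m (Suc j) x) = (\<Sum>c<m. sum h (succs m j (x @ [c])))"
  unfolding succs_Suc
  by (intro sum.UNION_disjoint finite_succs finite_lessThan ballI impI) (auto simp: succs_def)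

lemma sum_succs_1: "sum h (succs m 1 x) = (\<Sum>c<m. h (x @ [c]))"
proof -
  have "succs m 1 x = (\<lambda>c. x @ [c]) ` {..<m}"
    by (auto simp: succs_def length_Suc_conv)
  then show ?thesis
    by (simp add: sum.reindex inj_on_def)
qed

lemma Nil_in_tnodes [simp]: "[] \<in> tnodes m"
  by (simp add: tnodes_def)

lemma snoc_in_tnodes_iff [simp]: "x @ [c] \<in> tnodes m \<longleftrightarrow> x \<in> tnodes m \<and> c < m"
  by (auto simp: tnodes_def)

lemma take_in_tnodes: "x \<in> tnodes m \<Longrightarrow> take j x \<in> tnodes m"
  by (auto simp: tnodes_def dest: in_set_takeD)

lemma butlast_in_tnodes: "x \<in> tnodes m \<Longrightarrow> butlast x \<in> tnodes m"
  by (auto simp: tnodes_def dest: in_set_butlastD)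

lemma finite_tnodes_level: "finite {x \<in> tnodes m. length x = k}"
proof -
  have "{x \<in> tnodes m. length x = k} = {xs. set xs \<subseteq> {..<m} \<and> length xs = k}"
    by (auto simp: tnodes_def)
  then show ?thesis
    by (simp add: finite_lists_length_eq)
qed

lemma finite_tnodes_below: "finite {x \<in> tnodes m. length x < K}"
proof -
  have "{x \<in> tnodes m. length x < K} = (\<Union>k<K. {x \<in> tnodes m. length x = k})"
    by auto
  then show ?thesis
    by (simp add: finite_tnodes_level)
qed

lemma le_Sup_tnodes_level:
  fixes F :: "nat list \<Rightarrow> real"
  assumes "x \<in> tnodes m" "length x = k"
  shows "F x \<le> Sup {F y | y. y \<in> tnodes m \<and> length y = k}"
proof -
  have "{F y | y. y \<in> tnodes m \<and> length y = k} = F ` {y \<in> tnodes m. length y = k}"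
    by auto
  then show ?thesis
    using assms finite_tnodes_level by (auto intro!: cSup_upper bdd_above_finite)
qed

lemma passes_iff_nth: "passes z x \<longleftrightarrow> (\<forall>i<length x. x ! i = z i)"
proof -
  have "passes z x \<longleftrightarrow> map ((!) x) [0..<length x] = map z [0..<length x]"
    by (simp only: passes_def map_nth)
  also have "\<dots> \<longleftrightarrow> (\<forall>i<length x. x ! i = z i)"
    by (auto simp: map_eq_conv)
  finally show ?thesis .
qed

lemma passes_take: "passes z x \<Longrightarrow> passes z (take j x)"
  by (simp add: passes_iff_nth)

lemma ex_branch_passes:
  assumes "x \<in> tnodes m" "m > 0"
  obtains z where "z \<in> branches m" "passes z x"
proof
  define z where "z i = (if i < length x then x ! i else 0)" for i
  show "z \<in> branches m"
    using assms by (auto simp: z_def branches_def tnodes_def dest!: nth_mem)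
  show "passes z x"
    by (simp add: passes_iff_nth z_def)
qed

definition child_mean :: "nat \<Rightarrow> (nat list \<Rightarrow> real) \<Rightarrow> nat list \<Rightarrow> real" where
  "child_mean m u x = (\<Sum>c<m. u (x @ [c])) / real m"

lemma child_mean_add: "child_mean m (\<lambda>y. u y + w y) x = child_mean m u x + child_mean m w x"
  by (simp add: child_mean_def sum.distrib add_divide_distrib)

lemma avg_op_Nil: "avg_op m \<beta> u [] = u [] - child_mean m u []"
  unfolding avg_op_def sum_succs_1 child_mean_def by simp

lemma avg_op_nonroot:
  "x \<noteq> [] \<Longrightarrow> avg_op m \<beta> u x = u x - \<beta> * u (butlast x) - (1 - \<beta>) * child_mean m u x"
  unfolding avg_op_def pred_node_def sum_succs_1 child_mean_def by simp

lemma avg_op_add_scaled: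
  "avg_op m \<beta> (\<lambda>y. u y + t * w y) x = avg_op m \<beta> u x + t * avg_op m \<beta> w x"
  unfolding avg_op_def by (simp add: sum.distrib sum_distrib_left algebra_simps)

lemma avg_op_fun_upd_same: "avg_op m \<beta> (u(x := c)) x = avg_op m \<beta> u x + (c - u x)"
proof (cases "x = []")
  case True
  then show ?thesis
    by (simp add: avg_op_Nil child_mean_def)
next
  case False
  then have "butlast x \<noteq> x"
    by (cases x rule: rev_cases) auto
  with False show ?thesis
    by (simp add: avg_op_nonroot child_mean_def)
qed

lemma self_minus_avg_op_mono:
  assumes x: "x \<in> tnodes m" and uw: "\<And>y. y \<in> tnodes m \<Longrightarrow> u y \<le> w y"
    and \<beta>: "0 \<le> \<beta>" "\<beta> \<le> 1"
  shows "u x - avg_op m \<beta> u x \<le> w x - avg_op m \<beta> w x"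
proof -
  have children: "child_mean m u x \<le> child_mean m w x"
    unfolding child_mean_def using x uw by (intro divide_right_mono sum_mono) auto
  show ?thesis
  proof (cases "x = []")
    case True
    then show ?thesis
      using children by (simp add: avg_op_Nil)
  next
    case False
    have "\<beta> * u (butlast x) \<le> \<beta> * w (butlast x)"
      using \<beta> uw butlast_in_tnodes[OF x] by (intro mult_left_mono) auto
    moreover have "(1 - \<beta>) * child_mean m u x \<le> (1 - \<beta>) * child_mean m w x"
      using \<beta> children by (intro mult_left_mono) auto
    ultimately show ?thesis
      using False by (simp add: avg_op_nonroot)
  qed
qed

lemma avg_op_power_length_nonneg:
  assumes m: "m > 0" and \<beta>: "0 \<le> \<beta>" "\<beta> < 1" and \<rho>: "\<beta> / (1 - \<beta>) \<le> \<rho>" "\<rho> \<le> 1"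
  shows "0 \<le> avg_op m \<beta> (\<lambda>y. \<rho> ^ length y) x"
proof -
  have \<rho>0: "0 \<le> \<rho>"
    using \<beta> \<rho> by (smt (verit) divide_nonneg_nonneg)
  have children: "child_mean m (\<lambda>y. \<rho> ^ length y) x = \<rho> ^ Suc (length x)"
    using m by (simp add: child_mean_def)
  show ?thesis
  proof (cases x rule: rev_cases)
    case Nil
    then show ?thesis
      using \<rho> children by (simp add: avg_op_Nil)
  next
    case (snoc x' c)
    then have "x \<noteq> []"
      by simp
    have "(1 - \<beta>) * (\<beta> / (1 - \<beta>)) = \<beta>"
      using \<beta> by simp
    then have factor: "\<rho> - \<beta> - (1 - \<beta>) * \<rho>\<^sup>2 = (1 - \<beta>) * (\<rho> - \<beta> / (1 - \<beta>)) * (1 - \<rho>)"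
      by (simp add: power2_eq_square algebra_simps)
    have "avg_op m \<beta> (\<lambda>y. \<rho> ^ length y) x
        = \<rho> ^ length x' * (\<rho> - \<beta> - (1 - \<beta>) * \<rho>\<^sup>2)"
      unfolding avg_op_nonroot[OF \<open>x \<noteq> []\<close>] children
      by (simp add: snoc power2_eq_square algebra_simps)
    also have "\<dots> = \<rho> ^ length x' * ((1 - \<beta>) * (\<rho> - \<beta> / (1 - \<beta>)) * (1 - \<rho>))"
      unfolding factor ..
    also have "\<dots> \<ge> 0"
      using \<beta> \<rho> \<rho>0 by (intro mult_nonneg_nonneg) auto
    finally show ?thesis .
  qed
qed


section \<open>Path potentials and the series S\<close>

definition path_sum :: "real \<Rightarrow> (nat list \<Rightarrow> real) \<Rightarrow> nat list \<Rightarrow> real" where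
  "path_sum r S x = (\<Sum>j=1..length x. r ^ (length x - j) * S (anc x j))"

lemma path_sum_Nil [simp]: "path_sum r S [] = 0"
  by (simp add: path_sum_def)

lemma path_sum_snoc: "path_sum r S (x @ [c]) = r * path_sum r S x + S (x @ [c])"
proof -
  have "(\<Sum>j=1..length x. r ^ (Suc (length x) - j) * S (anc (x @ [c]) j))
      = r * (\<Sum>j=1..length x. r ^ (length x - j) * S (anc x j))"
    unfolding sum_distrib_left by (rule sum.cong) (auto simp: anc_def Suc_diff_le)
  then show ?thesis
    by (simp add: path_sum_def anc_def)
qed

lemma path_sum_add: "path_sum r (\<lambda>y. S y + T y) x = path_sum r S x + path_sum r T x"
  by (simp add: path_sum_def sum.distrib algebra_simps)

lemma one_minus_mult_sum_power: "(1 - r) * (\<Sum>j=1..k. r ^ (k - j)) = 1 - (r::real) ^ k"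
proof -
  have "(\<Sum>j=1..k. r ^ (k - j)) = (\<Sum>i<k. r ^ (k - Suc i))"
    by (rule sum.reindex_bij_witness[where i = Suc and j = "\<lambda>j. j - 1"]) auto
  then show ?thesis
    by (simp add: one_diff_power_eq')
qed

lemma path_sum_const: "(1 - r) * path_sum r (\<lambda>_. c) x = (1 - r ^ length x) * c"
proof -
  have "path_sum r (\<lambda>_. c) x = (\<Sum>j=1..length x. r ^ (length x - j)) * c"
    by (simp add: path_sum_def sum_distrib_right)
  then show ?thesis
    by (metis mult.assoc one_minus_mult_sum_power)
qed

definition path_potential :: "real \<Rightarrow> real \<Rightarrow> (nat list \<Rightarrow> real) \<Rightarrow> nat list \<Rightarrow> real" where
  "path_potential r a S x = a * r ^ length x + (1 - r) * path_sum r S x"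

lemma path_potential_snoc:
  "path_potential r a S (x @ [c]) = r * path_potential r a S x + (1 - r) * S (x @ [c])"
  by (simp add: path_potential_def path_sum_snoc algebra_simps)

lemma child_mean_path_potential:
  assumes "m > 0"
  shows "child_mean m (path_potential r a S) x = r * path_potential r a S x + (1 - r) * child_mean m S x"
  using assms
  by (simp add: child_mean_def path_potential_snoc sum.distrib sum_distrib_left[symmetric] add_divide_distrib)

lemma avg_op_path_potential_Nil:
  assumes "m > 0"
  shows "avg_op m \<beta> (path_potential r a S) [] = (1 - r) * (a - child_mean m S [])"
  using assms by (simp add: avg_op_Nil child_mean_path_potential path_potential_def algebra_simps)

lemma avg_op_path_potential_nonroot:
  assumes x: "x \<noteq> []" and m: "m > 0" and \<beta>: "\<beta> < 1"
  shows "avg_op m \<beta> (path_potential (\<beta> / (1 - \<beta>)) a S) x = (1 - 2 * \<beta>) * (S x - child_mean m S x)"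
proof -
  define r where "r = \<beta> / (1 - \<beta>)"
  define W where "W = path_potential r a S"
  have \<beta>r: "(1 - \<beta>) * r = \<beta>" "(1 - \<beta>) * (1 - r) = 1 - 2 * \<beta>"
    using \<beta> by (simp_all add: r_def field_simps)
  have "W x = r * W (butlast x) + (1 - r) * S x"
    using path_potential_snoc[of r a S "butlast x" "last x"] x by (simp add: W_def)
  then have Wx: "(1 - \<beta>) * W x = \<beta> * W (butlast x) + (1 - 2 * \<beta>) * S x"
    by (simp add: distrib_left mult.assoc[symmetric] \<beta>r)
  have children: "(1 - \<beta>) * (r * W x + (1 - r) * child_mean m S x)
      = \<beta> * W x + (1 - 2 * \<beta>) * child_mean m S x"
    by (simp add: distrib_left mult.assoc[symmetric] \<beta>r)
  have "avg_op m \<beta> W x = W x - \<beta> * W (butlast x) - (1 - \<beta>) * (r * W x + (1 - r) * child_mean m S x)"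
    using x m by (simp add: avg_op_nonroot child_mean_path_potential W_def)
  also have "\<dots> = (1 - \<beta>) * W x - \<beta> * W (butlast x) - (1 - 2 * \<beta>) * child_mean m S x"
    unfolding children by (simp add: algebra_simps)
  also have "\<dots> = (1 - 2 * \<beta>) * (S x - child_mean m S x)"
    unfolding Wx by (simp add: algebra_simps)
  finally show ?thesis
    by (simp add: W_def r_def)
qed

lemma child_mean_S_term:
  "child_mean m (\<lambda>y. S_term m \<beta> h y i) x
     = S_term m \<beta> h x (Suc i) - \<beta> ^ i / (1 - \<beta>) ^ Suc i * h x"
proof -
  define w where "w j = \<beta> ^ (i - j - 1) / (1 - \<beta>) ^ (i - j)" for j
  have "S_term m \<beta> h x (Suc i) = \<beta> ^ i / (1 - \<beta>) ^ Suc i * h x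
      + (\<Sum>j<i. w j * (1 / real m ^ Suc j) * (\<Sum>y\<in>succs m (Suc j) x. h y))"
    unfolding S_term_def w_def by (subst sum.lessThan_Suc_shift) (simp add: succs_0)
  moreover have "child_mean m (\<lambda>y. S_term m \<beta> h y i) x
      = (\<Sum>j<i. w j * (1 / real m ^ Suc j) * (\<Sum>y\<in>succs m (Suc j) x. h y))"
  proof -
    have "child_mean m (\<lambda>y. S_term m \<beta> h y i) x
        = (\<Sum>j<i. w j * (1 / real m ^ j) * ((\<Sum>c<m. \<Sum>y\<in>succs m j (x @ [c]). h y) / real m))"
      unfolding child_mean_def S_term_def w_def sum_divide_distrib
      by (subst sum.swap) (simp add: sum_distrib_left sum_divide_distrib mult_ac)
    then show ?thesis
      by (simp add: sum_succs_Suc mult_ac)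
  qed
  ultimately show ?thesis
    by simp
qed

lemma S_op_mean_value:
  assumes \<beta>: "0 \<le> \<beta>" "\<beta> < 1/2"
    and conv: "S_conv m \<beta> h x" "\<And>c. c < m \<Longrightarrow> S_conv m \<beta> h (x @ [c])"
  shows "S_op m \<beta> h x = h x / (1 - 2 * \<beta>) + child_mean m (S_op m \<beta> h) x"
proof -
  define r where "r = \<beta> / (1 - \<beta>)"
  have r: "0 \<le> r" "r < 1" "(1 - r) * (1 - \<beta>) = 1 - 2 * \<beta>"
    using \<beta> by (auto simp: r_def field_simps)
  have own: "(\<lambda>n. S_term m \<beta> h x (Suc n)) sums S_op m \<beta> h x"
    using conv(1) by (simp add: S_conv_def S_op_def summable_sums)
  have "(\<lambda>n. child_mean m (\<lambda>y. S_term m \<beta> h y (Suc n)) x) sums child_mean m (S_op m \<beta> h) x"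
    unfolding child_mean_def
    using conv(2) by (intro sums_divide sums_sum) (simp add: S_conv_def S_op_def summable_sums)
  from sums_Suc[where f = "\<lambda>n. child_mean m (\<lambda>y. S_term m \<beta> h y n) x", OF this]
  have children: "(\<lambda>n. child_mean m (\<lambda>y. S_term m \<beta> h y n) x) sums child_mean m (S_op m \<beta> h) x"
    by (simp add: child_mean_def S_term_def)
  have "(\<lambda>n. r ^ n * (h x / (1 - \<beta>))) sums (1 / (1 - r) * (h x / (1 - \<beta>)))"
    using r by (intro sums_mult2 geometric_sums) simp
  then have geom: "(\<lambda>n. \<beta> ^ n / (1 - \<beta>) ^ Suc n * h x) sums (h x / (1 - 2 * \<beta>))"
    using r(3) by (simp add: r_def power_divide mult.commute)
  have "(\<lambda>n. S_term m \<beta> h x (Suc n)) sums (child_mean m (S_op m \<beta> h) x + h x / (1 - 2 * \<beta>))"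
    using sums_add[OF children geom] by (simp add: child_mean_S_term)
  with own show ?thesis
    using sums_unique2 by fastforce
qed


section \<open>Interval averages of the boundary data\<close>

definition cell_start :: "nat \<Rightarrow> nat list \<Rightarrow> real" where
  "cell_start m x = (\<Sum>i<length x. real (x ! i) / real m ^ Suc i)"

definition cell_mean :: "nat \<Rightarrow> (real \<Rightarrow> real) \<Rightarrow> nat list \<Rightarrow> real" where
  "cell_mean m f x =
     integral {cell_start m x .. cell_start m x + 1 / real m ^ length x} f / (1 / real m ^ length x)"

lemma cell_start_Nil [simp]: "cell_start m [] = 0"
  by (simp add: cell_start_def)

lemma cell_start_snoc: "cell_start m (x @ [c]) = cell_start m x + real c / real m ^ Suc (length x)"
  by (simp add: cell_start_def nth_append)

lemma cell_in_unit_interval: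
  assumes "x \<in> tnodes m" "m > 0"
  shows "0 \<le> cell_start m x \<and> cell_start m x + 1 / real m ^ length x \<le> 1"
  using assms
proof (induction x rule: rev_induct)
  case (snoc c x)
  then have IH: "0 \<le> cell_start m x" "cell_start m x + 1 / real m ^ length x \<le> 1" and c: "c < m"
    by auto
  have "real c / real m ^ Suc (length x) + 1 / real m ^ Suc (length x) = (real c + 1) / real m ^ Suc (length x)"
    by (simp add: add_divide_distrib)
  also have "\<dots> \<le> real m / real m ^ Suc (length x)"
    using c by (intro divide_right_mono) auto
  also have "\<dots> = 1 / real m ^ length x"
    using snoc.prems(2) by simp
  finally show ?case
    using IH by (simp add: cell_start_snoc)
qed simp

lemma psi_in_cell:
  assumes m: "m \<ge> 2" and z: "z \<in> branches m" and zx: "passes z x"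
  shows "cell_start m x \<le> psi m z \<and> psi m z \<le> cell_start m x + 1 / real m ^ length x"
proof -
  define g where "g n = real (z n) / real m ^ Suc n" for n
  define k where "k = length x"
  define C where "C = (real m - 1) / real m ^ Suc k"
  have g0: "0 \<le> g n" for n
    by (simp add: g_def)
  have tail_le: "g (n + k) \<le> C * (1 / real m) ^ n" for n
  proof -
    have "Suc (z (n + k)) \<le> m"
      using z by (auto simp: branches_def Suc_le_eq)
    then have "real (z (n + k)) \<le> real m - 1"
      by linarith
    then have "real (z (n + k)) / real m ^ Suc k * (1 / real m) ^ n \<le> C * (1 / real m) ^ n"
      unfolding C_def using m by (intro mult_right_mono divide_right_mono) auto
    then show ?thesis
      using m by (simp add: g_def power_add power_divide field_simps)
  qed
  have geom: "(\<lambda>n. C * (1 / real m) ^ n) sums (C * (1 / (1 - 1 / real m)))"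
    using m by (intro sums_mult geometric_sums) auto
  have tail: "summable (\<lambda>n. g (n + k))"
    by (rule summable_comparison_test[OF _ sums_summable[OF geom]]) (use tail_le g0 in auto)
  then have "psi m z = (\<Sum>n. g (n + k)) + (\<Sum>i<k. g i)"
    unfolding psi_def g_def[symmetric] by (intro suminf_split_initial_segment) (simp add: summable_iff_shift)
  moreover have "(\<Sum>i<k. g i) = cell_start m x"
    using zx unfolding passes_iff_nth cell_start_def g_def k_def by (intro sum.cong) auto
  moreover have "0 \<le> (\<Sum>n. g (n + k))"
    using tail g0 by (intro suminf_nonneg) auto
  moreover have "(\<Sum>n. g (n + k)) \<le> C * (1 / (1 - 1 / real m))"
    using tail_le tail geom by (metis sums_summable suminf_le sums_unique)
  moreover have "C * (1 / (1 - 1 / real m)) = 1 / real m ^ k"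
    using m by (simp add: C_def field_simps)
  ultimately show ?thesis
    by (simp add: k_def)
qed

lemma psi_in_unit_interval: "m \<ge> 2 \<Longrightarrow> z \<in> branches m \<Longrightarrow> psi m z \<in> {0..1}"
  using psi_in_cell[of m z "[]"] by (simp add: passes_def)

lemma integral_split_uniform:
  fixes f :: "real \<Rightarrow> real"
  assumes "continuous_on {p..p + real n * d} f" "0 \<le> d"
  shows "integral {p..p + real n * d} f = (\<Sum>c<n. integral {p + real c * d..p + real (Suc c) * d} f)"
  using assms(1)
proof (induction n)
  case (Suc n)
  have "{p..p + real n * d} \<subseteq> {p..p + real (Suc n) * d}"
    using assms(2) by (auto simp: distrib_right)
  then have IH: "integral {p..p + real n * d} f = (\<Sum>c<n. integral {p + real c * d..p + real (Suc c) * d} f)"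
    using Suc by (blast intro: continuous_on_subset)
  have "f integrable_on {p..p + real (Suc n) * d}"
    using Suc.prems by (rule integrable_continuous_interval)
  then have "integral {p..p + real (Suc n) * d} f
      = integral {p..p + real n * d} f + integral {p + real n * d..p + real (Suc n) * d} f"
    by (intro Henstock_Kurzweil_Integration.integral_combine[symmetric])
      (use assms(2) in \<open>auto simp: algebra_simps\<close>)
  then show ?case
    using IH by simp
qed simp

lemma abs_integral_mean_minus_le:
  fixes f :: "real \<Rightarrow> real"
  assumes f: "continuous_on {p..p + d} f" and d: "0 < d" and e: "\<And>t. t \<in> {p..p + d} \<Longrightarrow> \<bar>f t - y\<bar> \<le> e"
  shows "\<bar>integral {p..p + d} f / d - y\<bar> \<le> e"
proof -
  have fi: "f integrable_on {p..p + d}"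
    using f by (rule integrable_continuous_interval)
  have "integral {p..p + d} f \<le> integral {p..p + d} (\<lambda>t. y + e)"
    by (rule integral_le[OF fi]) (use e in \<open>force simp: abs_le_iff\<close>)+
  moreover have "integral {p..p + d} (\<lambda>t. y - e) \<le> integral {p..p + d} f"
    by (rule integral_le[OF _ fi]) (use e in \<open>force simp: abs_le_iff\<close>)+
  ultimately have "d * (y - e) \<le> integral {p..p + d} f" "integral {p..p + d} f \<le> d * (y + e)"
    using d by (simp_all add: mult.commute)
  then have "y - e \<le> integral {p..p + d} f / d" "integral {p..p + d} f / d \<le> y + e"
    using d by (simp_all add: le_divide_eq divide_le_eq mult.commute)
  then show ?thesis
    by (simp add: abs_le_iff)
qed

lemma cell_mean_child_mean:
  assumes x: "x \<in> tnodes m" and m: "m > 0" and f: "continuous_on {0..1} f"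
  shows "cell_mean m f x = child_mean m (cell_mean m f) x"
proof -
  define d where "d = 1 / real m ^ Suc (length x)"
  define p where "p = cell_start m x"
  have d0: "0 < d"
    using m by (simp add: d_def)
  have md: "real m * d = 1 / real m ^ length x"
    using m by (simp add: d_def)
  have p: "0 \<le> p" "p + real m * d \<le> 1"
    using cell_in_unit_interval[OF x m] md by (auto simp: p_def)
  have "integral {p..p + real m * d} f = (\<Sum>c<m. integral {p + real c * d..p + real (Suc c) * d} f)"
    using p d0 by (intro integral_split_uniform continuous_on_subset[OF f]) auto
  moreover have "cell_mean m f (x @ [c]) = integral {p + real c * d..p + real (Suc c) * d} f / d" for c
  proof -
    have "cell_start m (x @ [c]) = p + real c * d"
      by (simp add: cell_start_snoc p_def d_def)
    moreover have "1 / real m ^ length (x @ [c]) = d"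
      by (simp add: d_def)
    ultimately show ?thesis
      by (simp add: cell_mean_def algebra_simps)
  qed
  ultimately have "cell_mean m f x = (\<Sum>c<m. d * cell_mean m f (x @ [c])) / (real m * d)"
    unfolding cell_mean_def md[symmetric] p_def[symmetric] using d0 by simp
  then show ?thesis
    using d0 by (simp add: child_mean_def sum_distrib_left[symmetric])
qed

lemma abs_cell_mean_le:
  assumes m: "m > 0" and f: "continuous_on {0..1} f" and M: "\<And>t. t \<in> {0..1} \<Longrightarrow> \<bar>f t\<bar> \<le> M"
    and x: "x \<in> tnodes m"
  shows "\<bar>cell_mean m f x\<bar> \<le> M"
proof -
  have cell: "0 \<le> cell_start m x" "cell_start m x + 1 / real m ^ length x \<le> 1"
    using cell_in_unit_interval[OF x m] by auto
  have "\<bar>cell_mean m f x - 0\<bar> \<le> M"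
    unfolding cell_mean_def
    by (rule abs_integral_mean_minus_le) (use m cell M in \<open>auto intro: continuous_on_subset[OF f]\<close>)
  then show ?thesis
    by simp
qed

lemma abs_cell_mean_minus_le:
  assumes m: "m \<ge> 2" and f: "continuous_on {0..1} f" and x: "x \<in> tnodes m"
    and z: "z \<in> branches m" "passes z x"
    and e: "\<And>s. s \<in> {0..1} \<Longrightarrow> \<bar>s - psi m z\<bar> \<le> 1 / real m ^ length x \<Longrightarrow> \<bar>f s - f (psi m z)\<bar> \<le> e"
  shows "\<bar>cell_mean m f x - f (psi m z)\<bar> \<le> e"
proof -
  have cell: "0 \<le> cell_start m x" "cell_start m x + 1 / real m ^ length x \<le> 1"
    using cell_in_unit_interval[OF x] m by auto
  have \<psi>: "cell_start m x \<le> psi m z" "psi m z \<le> cell_start m x + 1 / real m ^ length x"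
    using psi_in_cell[OF m z] by auto
  show ?thesis
    unfolding cell_mean_def
  proof (rule abs_integral_mean_minus_le)
    show "continuous_on {cell_start m x..cell_start m x + 1 / real m ^ length x} f"
      using cell by (auto intro: continuous_on_subset[OF f])
    show "0 < 1 / real m ^ length x"
      using m by simp
    show "\<bar>f t - f (psi m z)\<bar> \<le> e" if "t \<in> {cell_start m x..cell_start m x + 1 / real m ^ length x}" for t
      using that cell \<psi> by (intro e) auto
  qed
qed

lemma boundary_val_cell_mean:
  assumes m: "m \<ge> 2" and f: "continuous_on {0..1} f"
  shows "boundary_val m (cell_mean m f) f"
  unfolding boundary_val_def
proof (intro allI impI)
  fix \<epsilon> :: real
  assume "\<epsilon> > 0"
  have "uniformly_continuous_on {0..1} f"
    using compact_uniformly_continuous[OF f] by simp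
  then obtain \<delta> where "\<delta> > 0"
    and \<delta>: "\<And>s t. s \<in> {0..1} \<Longrightarrow> t \<in> {0..1} \<Longrightarrow> dist s t < \<delta> \<Longrightarrow> dist (f s) (f t) < \<epsilon> / 2"
    unfolding uniformly_continuous_on_def using \<open>\<epsilon> > 0\<close> by (metis half_gt_zero)
  obtain K where K: "(1 / real m) ^ K < \<delta>"
    using real_arch_pow_inv[OF \<open>\<delta> > 0\<close>, of "1 / real m"] m by auto
  show "\<exists>K. \<forall>x\<in>tnodes m. K \<le> length x \<longrightarrow>
      (\<forall>z\<in>branches m. passes z x \<longrightarrow> \<bar>cell_mean m f x - f (psi m z)\<bar> < \<epsilon>)"
  proof (intro exI ballI impI)
    fix x z
    assume x: "x \<in> tnodes m" "K \<le> length x" and z: "z \<in> branches m" "passes z x"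
    have "(1 / real m) ^ length x \<le> (1 / real m) ^ K"
      using m x(2) by (intro power_decreasing) auto
    then have small: "1 / real m ^ length x < \<delta>"
      using K by (simp add: power_one_over)
    have "\<bar>cell_mean m f x - f (psi m z)\<bar> \<le> \<epsilon> / 2"
      using \<delta> small psi_in_unit_interval[OF m z(1)]
      by (intro abs_cell_mean_minus_le[OF m f x(1) z] less_imp_le) (auto simp: dist_real_def)
    then show "\<bar>cell_mean m f x - f (psi m z)\<bar> < \<epsilon>"
      using \<open>\<epsilon> > 0\<close> by simp
  qed
qed


section \<open>Boundary values\<close>

lemma boundary_val_approx:
  assumes u: "boundary_val m u f" and vu: "\<And>x. x \<in> tnodes m \<Longrightarrow> \<bar>v x - u x\<bar> \<le> e (length x)"
    and e: "e \<longlonglongrightarrow> 0"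
  shows "boundary_val m v f"
  unfolding boundary_val_def
proof (intro allI impI)
  fix \<epsilon> :: real
  assume "\<epsilon> > 0"
  then obtain K1 where K1: "\<forall>x\<in>tnodes m. K1 \<le> length x \<longrightarrow>
      (\<forall>z\<in>branches m. passes z x \<longrightarrow> \<bar>u x - f (psi m z)\<bar> < \<epsilon> / 2)"
    using u unfolding boundary_val_def by (meson half_gt_zero)
  obtain K2 where K2: "\<And>n. K2 \<le> n \<Longrightarrow> e n < \<epsilon> / 2"
    using order_tendstoD(2)[OF e, of "\<epsilon> / 2"] \<open>\<epsilon> > 0\<close> by (auto simp: eventually_sequentially)
  show "\<exists>K. \<forall>x\<in>tnodes m. K \<le> length x \<longrightarrow>
      (\<forall>z\<in>branches m. passes z x \<longrightarrow> \<bar>v x - f (psi m z)\<bar> < \<epsilon>)"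
  proof (intro exI[of _ "max K1 K2"] ballI impI)
    fix x z
    assume x: "x \<in> tnodes m" "max K1 K2 \<le> length x" and z: "z \<in> branches m" "passes z x"
    have "\<bar>u x - f (psi m z)\<bar> < \<epsilon> / 2"
      using K1 x z by auto
    moreover have "\<bar>v x - u x\<bar> < \<epsilon> / 2"
      using vu[OF x(1)] K2[of "length x"] x by auto
    ultimately show "\<bar>v x - f (psi m z)\<bar> < \<epsilon>"
      by linarith
  qed
qed

lemma sum_if_less_le:
  assumes "0 \<le> (c::real)"
  shows "(\<Sum>j=1..k. if j < J then c else 0) \<le> real J * c"
proof -
  have "(\<Sum>j=1..k. if j < J then c else 0) = (\<Sum>j\<in>{1..k} \<inter> {..<J}. c)"
    unfolding sum.inter_restrict[OF finite_atLeastAtMost] by simp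
  also have "\<dots> \<le> (\<Sum>j<J. c)"
    using assms by (intro sum_mono2) auto
  finally show ?thesis
    by simp
qed

lemma abs_geometric_average_le:
  fixes d :: "nat \<Rightarrow> real"
  assumes r: "0 \<le> r" "r < 1" and C: "0 \<le> C" "\<And>j. j \<in> {1..k} \<Longrightarrow> \<bar>d j\<bar> \<le> C"
    and \<epsilon>: "0 \<le> \<epsilon>" "\<And>j. j \<in> {1..k} \<Longrightarrow> J \<le> j \<Longrightarrow> \<bar>d j\<bar> \<le> \<epsilon>"
  shows "\<bar>(1 - r) * (\<Sum>j=1..k. r ^ (k - j) * d j)\<bar> \<le> \<epsilon> + real J * C * r ^ (k - J)"
proof -
  define early where "early j = (if j < J then C * r ^ (k - J) else 0)" for j
  have bound: "\<bar>r ^ (k - j) * d j\<bar> \<le> \<epsilon> * r ^ (k - j) + early j" if j: "j \<in> {1..k}" for j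
  proof (cases "J \<le> j")
    case True
    then have "\<bar>r ^ (k - j) * d j\<bar> \<le> r ^ (k - j) * \<epsilon>"
      using \<epsilon> j r by (simp add: abs_mult mult_left_mono)
    then show ?thesis
      using True by (simp add: early_def mult.commute)
  next
    case False
    then have "\<bar>r ^ (k - j) * d j\<bar> \<le> r ^ (k - J) * C"
      using C j r by (simp add: abs_mult) (intro mult_mono power_decreasing, auto)
    moreover have "0 \<le> \<epsilon> * r ^ (k - j)"
      using \<epsilon> r by simp
    ultimately show ?thesis
      using False by (simp add: early_def mult.commute)
  qed
  have "0 \<le> (\<Sum>j=1..k. early j)" "(\<Sum>j=1..k. early j) \<le> real J * C * r ^ (k - J)"
    using sum_if_less_le[where c = "C * r ^ (k - J)" and k = k and J = J] C r by (auto simp: early_def intro: sum_nonneg)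
  then have early_sum: "(1 - r) * (\<Sum>j=1..k. early j) \<le> real J * C * r ^ (k - J)"
    using r by (smt (verit) mult_left_le_one_le)
  have "\<bar>\<Sum>j=1..k. r ^ (k - j) * d j\<bar> \<le> (\<Sum>j=1..k. \<epsilon> * r ^ (k - j) + early j)"
    by (intro order_trans[OF sum_abs] sum_mono bound) auto
  then have "\<bar>(1 - r) * (\<Sum>j=1..k. r ^ (k - j) * d j)\<bar> \<le> (1 - r) * (\<Sum>j=1..k. \<epsilon> * r ^ (k - j) + early j)"
    using r by (simp add: abs_mult mult_left_mono)
  also have "\<dots> = \<epsilon> * (1 - r ^ k) + (1 - r) * (\<Sum>j=1..k. early j)"
    by (simp add: sum.distrib sum_distrib_left[symmetric] one_minus_mult_sum_power[symmetric] algebra_simps)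
  also have "\<dots> \<le> \<epsilon> + real J * C * r ^ (k - J)"
    using early_sum \<epsilon> r by (smt (verit) mult_left_le zero_le_power)
  finally show ?thesis .
qed

lemma abs_path_average_minus_le:
  assumes r: "0 \<le> r" "r < 1" and x: "x \<in> tnodes m"
    and G: "\<And>y. y \<in> tnodes m \<Longrightarrow> \<bar>G y\<bar> \<le> M" and c: "\<bar>c\<bar> \<le> M"
    and close: "\<And>j. J \<le> j \<Longrightarrow> j \<le> length x \<Longrightarrow> \<bar>G (take j x) - c\<bar> \<le> \<epsilon>" and "0 \<le> \<epsilon>"
  shows "\<bar>(1 - r) * path_sum r G x - c\<bar> \<le> \<epsilon> + (2 * M * real J + M) * r ^ (length x - J)"
proof -
  define k where "k = length x"
  have "0 \<le> M"
    using G[of "[]"] by simp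
  have "(1 - r) * path_sum r G x - c = (1 - r) * path_sum r (\<lambda>y. G y + - c) x - r ^ k * c"
    using path_sum_add[of r G "\<lambda>_. - c" x] path_sum_const[of r "- c" x]
    by (simp add: k_def algebra_simps)
  also have "path_sum r (\<lambda>y. G y + - c) x = (\<Sum>j=1..k. r ^ (k - j) * (G (anc x j) - c))"
    by (simp add: path_sum_def k_def)
  finally have split: "(1 - r) * path_sum r G x - c
      = (1 - r) * (\<Sum>j=1..k. r ^ (k - j) * (G (anc x j) - c)) - r ^ k * c" .
  have "\<bar>(1 - r) * (\<Sum>j=1..k. r ^ (k - j) * (G (anc x j) - c))\<bar> \<le> \<epsilon> + real J * (2 * M) * r ^ (k - J)"
  proof (rule abs_geometric_average_le)
    show "\<bar>G (anc x j) - c\<bar> \<le> 2 * M" for j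
      using G[OF take_in_tnodes[OF x, of j]] c abs_triangle_ineq4[of "G (anc x j)" c]
      by (simp add: anc_def)
    show "\<bar>G (anc x j) - c\<bar> \<le> \<epsilon>" if "j \<in> {1..k}" "J \<le> j" for j
      using close that by (simp add: anc_def k_def)
  qed (use r \<open>0 \<le> M\<close> \<open>0 \<le> \<epsilon>\<close> in auto)
  moreover have "\<bar>r ^ k * c\<bar> \<le> M * r ^ (k - J)"
  proof -
    have "r ^ k \<le> r ^ (k - J)"
      using r by (intro power_decreasing) auto
    then have "r ^ k * \<bar>c\<bar> \<le> r ^ (k - J) * M"
      using c r by (intro mult_mono) auto
    then show ?thesis
      using r by (simp add: abs_mult mult.commute)
  qed
  moreover have "real J * (2 * M) * r ^ (k - J) + M * r ^ (k - J) = (2 * M * real J + M) * r ^ (k - J)"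
    by (simp add: algebra_simps)
  ultimately show ?thesis
    unfolding split k_def[symmetric] by linarith
qed

lemma boundary_val_path_average:
  assumes G: "boundary_val m G f" and GM: "\<And>x. x \<in> tnodes m \<Longrightarrow> \<bar>G x\<bar> \<le> M"
    and fM: "\<And>z. z \<in> branches m \<Longrightarrow> \<bar>f (psi m z)\<bar> \<le> M" and r: "0 \<le> r" "r < 1"
  shows "boundary_val m (\<lambda>x. (1 - r) * path_sum r G x) f"
  unfolding boundary_val_def
proof (intro allI impI)
  fix \<epsilon> :: real
  assume "\<epsilon> > 0"
  then obtain J where J: "\<forall>x\<in>tnodes m. J \<le> length x \<longrightarrow>
      (\<forall>z\<in>branches m. passes z x \<longrightarrow> \<bar>G x - f (psi m z)\<bar> < \<epsilon> / 2)"
    using G unfolding boundary_val_def by (meson half_gt_zero)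
  have "(\<lambda>n. (2 * M * real J + M) * r ^ n) \<longlonglongrightarrow> 0"
    using r by (intro tendsto_mult_right_zero LIMSEQ_power_zero) auto
  then obtain N where N: "\<And>n. N \<le> n \<Longrightarrow> (2 * M * real J + M) * r ^ n < \<epsilon> / 2"
    using order_tendstoD(2)[of _ 0 sequentially "\<epsilon> / 2"] \<open>\<epsilon> > 0\<close>
    by (auto simp: eventually_sequentially)
  show "\<exists>K. \<forall>x\<in>tnodes m. K \<le> length x \<longrightarrow>
      (\<forall>z\<in>branches m. passes z x \<longrightarrow> \<bar>(1 - r) * path_sum r G x - f (psi m z)\<bar> < \<epsilon>)"
  proof (intro exI[of _ "J + N"] ballI impI)
    fix x z
    assume x: "x \<in> tnodes m" "J + N \<le> length x" and z: "z \<in> branches m" "passes z x"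
    have "\<bar>G (take j x) - f (psi m z)\<bar> \<le> \<epsilon> / 2" if "J \<le> j" "j \<le> length x" for j
      using J take_in_tnodes[OF x(1)] passes_take[OF z(2)] z(1) that by fastforce
    then have "\<bar>(1 - r) * path_sum r G x - f (psi m z)\<bar> \<le> \<epsilon> / 2 + (2 * M * real J + M) * r ^ (length x - J)"
      using \<open>\<epsilon> > 0\<close> by (intro abs_path_average_minus_le[OF r x(1) GM fM[OF z(1)]]) auto
    moreover have "(2 * M * real J + M) * r ^ (length x - J) < \<epsilon> / 2"
      using N x(2) by simp
    ultimately show "\<bar>(1 - r) * path_sum r G x - f (psi m z)\<bar> < \<epsilon>"
      by linarith
  qed
qed

lemma boundary_val_eventually_less:
  assumes m: "m \<ge> 2" and fg: "continuous_on {0..1} f" "continuous_on {0..1} g" "\<forall>s\<in>{0..1}. f s > g s"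
    and U: "boundary_val m U f" and V: "boundary_val m V g"
  obtains K where "\<And>x. x \<in> tnodes m \<Longrightarrow> K \<le> length x \<Longrightarrow> V x < U x"
proof -
  obtain s0 where s0: "s0 \<in> {0..1}" "\<And>s. s \<in> {0..1} \<Longrightarrow> f s0 - g s0 \<le> f s - g s"
    using continuous_attains_inf[OF compact_Icc _ continuous_on_diff[OF fg(1,2)]] by auto
  define \<delta> where "\<delta> = f s0 - g s0"
  have "\<delta> > 0"
    using fg(3) s0 by (auto simp: \<delta>_def)
  then obtain K1 K2 where
    K1: "\<forall>x\<in>tnodes m. K1 \<le> length x \<longrightarrow> (\<forall>z\<in>branches m. passes z x \<longrightarrow> \<bar>U x - f (psi m z)\<bar> < \<delta> / 2)" and
    K2: "\<forall>x\<in>tnodes m. K2 \<le> length x \<longrightarrow> (\<forall>z\<in>branches m. passes z x \<longrightarrow> \<bar>V x - g (psi m z)\<bar> < \<delta> / 2)"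
    using U V unfolding boundary_val_def by (meson half_gt_zero)
  show thesis
  proof (rule that[of "max K1 K2"])
    fix x
    assume x: "x \<in> tnodes m" "max K1 K2 \<le> length x"
    obtain z where z: "z \<in> branches m" "passes z x"
      using ex_branch_passes[OF x(1)] m by auto
    have "\<bar>U x - f (psi m z)\<bar> < \<delta> / 2" "\<bar>V x - g (psi m z)\<bar> < \<delta> / 2"
      using K1 K2 x z by auto
    moreover have "\<delta> \<le> f (psi m z) - g (psi m z)"
      using s0 psi_in_unit_interval[OF m z(1)] by (auto simp: \<delta>_def)
    ultimately show "V x < U x"
      unfolding abs_less_iff by linarith
  qed
qed


section \<open>The Dirichlet problem\<close>

lemma boundary_val_path_potential:
  assumes m: "m \<ge> 2" and f: "continuous_on {0..1} f" and r: "0 \<le> r" "r < 1"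
    and decay: "(\<lambda>k. Sup {\<bar>\<Sum>j=1..k. r ^ (k - j) * T (anc x j)\<bar> | x. x \<in> tnodes m \<and> length x = k})
      \<longlonglongrightarrow> 0"
  shows "boundary_val m (path_potential r a (\<lambda>y. T y + cell_mean m f y)) f"
proof -
  define Sk where "Sk = (\<lambda>k. Sup {\<bar>\<Sum>j=1..k. r ^ (k - j) * T (anc x j)\<bar> | x. x \<in> tnodes m \<and> length x = k})"
  obtain M where M: "\<forall>t\<in>{0..1}. \<bar>f t\<bar> \<le> M"
    using compact_imp_bounded[OF compact_continuous_image[OF f compact_Icc]] by (auto simp: bounded_iff)
  have "boundary_val m (\<lambda>x. (1 - r) * path_sum r (cell_mean m f) x) f"
  proof (rule boundary_val_path_average[OF boundary_val_cell_mean[OF m f] _ _ r])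
    show "\<bar>cell_mean m f x\<bar> \<le> M" if "x \<in> tnodes m" for x
      using m M that by (intro abs_cell_mean_le[OF _ f]) auto
    show "\<bar>f (psi m z)\<bar> \<le> M" if "z \<in> branches m" for z
      using M psi_in_unit_interval[OF m that] by blast
  qed
  moreover have "\<bar>path_potential r a (\<lambda>y. T y + cell_mean m f y) x - (1 - r) * path_sum r (cell_mean m f) x\<bar>
      \<le> \<bar>a\<bar> * r ^ length x + (1 - r) * Sk (length x)" if x: "x \<in> tnodes m" for x
  proof -
    have "\<bar>path_sum r T x\<bar> \<le> Sk (length x)"
      unfolding Sk_def path_sum_def
      by (rule le_Sup_tnodes_level[OF x refl,
            where F = "\<lambda>y. \<bar>\<Sum>j=1..length x. r ^ (length x - j) * T (anc y j)\<bar>"])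
    then have "\<bar>a * r ^ length x + (1 - r) * path_sum r T x\<bar> \<le> \<bar>a\<bar> * r ^ length x + (1 - r) * Sk (length x)"
      using r by (intro order_trans[OF abs_triangle_ineq add_mono]) (auto simp: abs_mult mult_left_mono)
    moreover have "path_potential r a (\<lambda>y. T y + cell_mean m f y) x - (1 - r) * path_sum r (cell_mean m f) x
        = a * r ^ length x + (1 - r) * path_sum r T x"
      by (simp add: path_potential_def path_sum_add algebra_simps)
    ultimately show ?thesis
      by simp
  qed
  moreover have "(\<lambda>k. \<bar>a\<bar> * r ^ k + (1 - r) * Sk k) \<longlonglongrightarrow> 0"
    using decay r unfolding Sk_def[symmetric]
    by (intro tendsto_add_zero tendsto_mult_right_zero LIMSEQ_power_zero) auto
  ultimately show ?thesis
    by (rule boundary_val_approx)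
qed

lemma dirichlet_problem_solvable:
  assumes m: "m \<ge> 2" and \<beta>: "0 \<le> \<beta>" "\<beta> < 1/2" and f: "continuous_on {0..1} f"
    and conv: "\<forall>x\<in>tnodes m. S_conv m \<beta> h x"
    and lim: "(\<lambda>k. Sup {\<bar>\<Sum>j=1..k. (\<beta> / (1 - \<beta>)) ^ (k - j) * S_op m \<beta> h (anc x j)\<bar> | x.
                    x \<in> tnodes m \<and> length x = k}) \<longlonglongrightarrow> 0"
  obtains U where "\<And>x. x \<in> tnodes m \<Longrightarrow> avg_op m \<beta> U x = h x" and "boundary_val m U f"
proof -
  define r where "r = \<beta> / (1 - \<beta>)"
  have r: "0 \<le> r" "r < 1"
    using \<beta> by (auto simp: r_def field_simps)
  define S where "S = (\<lambda>y. S_op m \<beta> h y + cell_mean m f y)"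
  have S: "S x - child_mean m S x = h x / (1 - 2 * \<beta>)" if x: "x \<in> tnodes m" for x
  proof -
    have "S_op m \<beta> h x = h x / (1 - 2 * \<beta>) + child_mean m (S_op m \<beta> h) x"
      using conv x by (intro S_op_mean_value[OF \<beta>]) auto
    moreover have "cell_mean m f x = child_mean m (cell_mean m f) x"
      using x m f by (intro cell_mean_child_mean) auto
    ultimately show ?thesis
      by (simp add: S_def child_mean_add)
  qed
  define a where "a = child_mean m S [] + h [] / (1 - r)"
  define U where "U = path_potential r a S"
  have "avg_op m \<beta> U x = h x" if x: "x \<in> tnodes m" for x
  proof (cases "x = []")
    case True
    then show ?thesis
      using m r by (simp add: U_def a_def avg_op_path_potential_Nil)
  next
    case False
    then show ?thesis
      using m \<beta> S[OF x] by (simp add: U_def r_def avg_op_path_potential_nonroot)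
  qed
  moreover have "boundary_val m U f"
    unfolding U_def S_def by (rule boundary_val_path_potential[OF m f r lim[folded r_def]])
  ultimately show thesis
    using that by blast
qed


section \<open>The obstacle problem\<close>

definition supersolutions_above ::
    "nat \<Rightarrow> real \<Rightarrow> (nat list \<Rightarrow> real) \<Rightarrow> (nat list \<Rightarrow> real) \<Rightarrow> (nat list \<Rightarrow> real) set" where
  "supersolutions_above m \<beta> h \<phi> = {w. \<forall>x\<in>tnodes m. h x \<le> avg_op m \<beta> w x \<and> \<phi> x \<le> w x}"

lemma ex_least_supersolution_above:
  assumes \<beta>: "0 \<le> \<beta>" "\<beta> \<le> 1" and B: "B \<in> supersolutions_above m \<beta> h \<phi>"
  obtains u where "u \<in> supersolutions_above m \<beta> h \<phi>"
    and "\<forall>w\<in>supersolutions_above m \<beta> h \<phi>. \<forall>x\<in>tnodes m. u x \<le> w x"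
proof -
  define \<Phi> where "\<Phi> = supersolutions_above m \<beta> h \<phi>"
  define u where "u x = Inf ((\<lambda>w. w x) ` \<Phi>)" for x
  have lower: "u x \<le> w x" if "x \<in> tnodes m" "w \<in> \<Phi>" for x w
    unfolding u_def by (rule cInf_lower) (use that in \<open>auto simp: \<Phi>_def supersolutions_above_def bdd_below_def\<close>)
  have greatest: "c \<le> u x" if "\<And>w. w \<in> \<Phi> \<Longrightarrow> c \<le> w x" for x c
    unfolding u_def by (rule cInf_greatest) (use that B in \<open>auto simp: \<Phi>_def\<close>)
  have "h x \<le> avg_op m \<beta> u x \<and> \<phi> x \<le> u x" if x: "x \<in> tnodes m" for x
  proof
    have "h x + (u x - avg_op m \<beta> u x) \<le> u x"
    proof (rule greatest)
      fix w
      assume w: "w \<in> \<Phi>"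
      have "u x - avg_op m \<beta> u x \<le> w x - avg_op m \<beta> w x"
        using x lower w \<beta> by (intro self_minus_avg_op_mono) auto
      moreover have "h x \<le> avg_op m \<beta> w x"
        using w x by (simp add: \<Phi>_def supersolutions_above_def)
      ultimately show "h x + (u x - avg_op m \<beta> u x) \<le> w x"
        by linarith
    qed
    then show "h x \<le> avg_op m \<beta> u x"
      by linarith
    show "\<phi> x \<le> u x"
      using x by (intro greatest) (simp add: \<Phi>_def supersolutions_above_def)
  qed
  then have "u \<in> \<Phi>"
    by (simp add: \<Phi>_def supersolutions_above_def)
  then show thesis
    using that lower unfolding \<Phi>_def by blast
qed

lemma lowered_in_supersolutions_above:
  assumes \<beta>: "0 \<le> \<beta>" "\<beta> \<le> 1" and u: "u \<in> supersolutions_above m \<beta> h \<phi>"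
    and \<epsilon>: "0 \<le> \<epsilon>" "\<epsilon> \<le> avg_op m \<beta> u x - h x" "\<epsilon> \<le> u x - \<phi> x"
  shows "u(x := u x - \<epsilon>) \<in> supersolutions_above m \<beta> h \<phi>"
  unfolding supersolutions_above_def
proof (intro CollectI ballI)
  fix y
  assume y: "y \<in> tnodes m"
  have u_y: "h y \<le> avg_op m \<beta> u y" "\<phi> y \<le> u y"
    using u y by (auto simp: supersolutions_above_def)
  show "h y \<le> avg_op m \<beta> (u(x := u x - \<epsilon>)) y \<and> \<phi> y \<le> (u(x := u x - \<epsilon>)) y"
  proof (cases "y = x")
    case True
    then show ?thesis
      using \<epsilon> by (simp add: avg_op_fun_upd_same)
  next
    case False
    have "(u(x := u x - \<epsilon>)) y - avg_op m \<beta> (u(x := u x - \<epsilon>)) y \<le> u y - avg_op m \<beta> u y"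
      using y \<epsilon> \<beta> by (intro self_minus_avg_op_mono) auto
    then show ?thesis
      using False u_y by simp
  qed
qed

lemma least_supersolution_complementarity:
  fixes U V :: "nat list \<Rightarrow> real"
  defines "\<phi> \<equiv> \<lambda>x. max (U x) (V x)"
  assumes \<beta>: "0 \<le> \<beta>" "\<beta> \<le> 1" and U: "\<And>x. x \<in> tnodes m \<Longrightarrow> avg_op m \<beta> U x = h x"
    and u: "u \<in> supersolutions_above m \<beta> h \<phi>"
    and least: "\<forall>w\<in>supersolutions_above m \<beta> h \<phi>. \<forall>y\<in>tnodes m. u y \<le> w y"
    and x: "x \<in> tnodes m"
  shows "max (- avg_op m \<beta> u x + h x) (V x - u x) = 0"
proof (rule ccontr)
  have u_super: "h y \<le> avg_op m \<beta> u y" and u_above: "U y \<le> u y" "V y \<le> u y" if "y \<in> tnodes m" for y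
    using u that by (auto simp: supersolutions_above_def \<phi>_def)
  assume "max (- avg_op m \<beta> u x + h x) (V x - u x) \<noteq> 0"
  then have super: "h x < avg_op m \<beta> u x" and above: "V x < u x"
    using u_super[OF x] u_above(2)[OF x] by (auto simp: max_def split: if_splits)
  show False
  proof (cases "u x = U x")
    case True
    have "U x - avg_op m \<beta> U x \<le> u x - avg_op m \<beta> u x"
      using x u_above \<beta> by (intro self_minus_avg_op_mono) auto
    then show False
      using True U[OF x] super by simp
  next
    case False
    then have "\<phi> x < u x"
      using u_above[OF x] above by (simp add: \<phi>_def)
    define \<epsilon> where "\<epsilon> = min (avg_op m \<beta> u x - h x) (u x - \<phi> x)"
    have "\<epsilon> > 0"
      using super \<open>\<phi> x < u x\<close> by (simp add: \<epsilon>_def)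
    have "u(x := u x - \<epsilon>) \<in> supersolutions_above m \<beta> h \<phi>"
      using \<open>\<epsilon> > 0\<close> by (intro lowered_in_supersolutions_above[OF \<beta> u]) (auto simp: \<epsilon>_def)
    then have "u x \<le> u x - \<epsilon>"
      using least x by fastforce
    then show False
      using \<open>\<epsilon> > 0\<close> by simp
  qed
qed

lemma barrier_in_supersolutions_above:
  assumes m: "m > 0" and \<beta>: "0 \<le> \<beta>" "\<beta> < 1/2"
    and U: "\<And>x. x \<in> tnodes m \<Longrightarrow> avg_op m \<beta> U x = h x"
    and VU: "\<And>x. x \<in> tnodes m \<Longrightarrow> K \<le> length x \<Longrightarrow> V x < U x"
  obtains t \<rho> :: real where "0 < \<rho>" "\<rho> < 1"
    and "(\<lambda>x. U x + t * \<rho> ^ length x) \<in> supersolutions_above m \<beta> h (\<lambda>x. max (U x) (V x))"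
proof -
  define r where "r = \<beta> / (1 - \<beta>)"
  define \<rho> where "\<rho> = (1 + r) / 2"
  have "0 \<le> r" "r < 1"
    using \<beta> by (auto simp: r_def field_simps)
  then have \<rho>: "r \<le> \<rho>" "\<rho> < 1" "0 < \<rho>"
    unfolding \<rho>_def by auto
  define t where "t = Max (insert 0 ((\<lambda>x. (V x - U x) / \<rho> ^ length x) ` {x \<in> tnodes m. length x < K}))"
  have "0 \<le> t"
    by (simp add: t_def finite_tnodes_below)
  have near_root: "V x - U x \<le> t * \<rho> ^ length x" if "x \<in> tnodes m" "length x < K" for x
  proof -
    have "(V x - U x) / \<rho> ^ length x \<le> t"
      unfolding t_def using that by (intro Max_ge) (auto simp: finite_tnodes_below)
    then show ?thesis
      using \<rho> by (simp add: divide_le_eq)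
  qed
  have "h x \<le> avg_op m \<beta> (\<lambda>y. U y + t * \<rho> ^ length y) x \<and> max (U x) (V x) \<le> U x + t * \<rho> ^ length x"
    if x: "x \<in> tnodes m" for x
  proof
    have "0 \<le> avg_op m \<beta> (\<lambda>y. \<rho> ^ length y) x"
      using m \<beta> \<rho> by (intro avg_op_power_length_nonneg) (auto simp: r_def)
    then show "h x \<le> avg_op m \<beta> (\<lambda>y. U y + t * \<rho> ^ length y) x"
      using \<open>0 \<le> t\<close> by (simp add: avg_op_add_scaled U[OF x])
    have "0 \<le> t * \<rho> ^ length x"
      using \<open>0 \<le> t\<close> \<rho> by simp
    then show "max (U x) (V x) \<le> U x + t * \<rho> ^ length x"
      using near_root[OF x] VU[OF x] by (cases "length x < K") auto
  qed
  then have "(\<lambda>x. U x + t * \<rho> ^ length x) \<in> supersolutions_above m \<beta> h (\<lambda>x. max (U x) (V x))"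
    unfolding supersolutions_above_def by blast
  then show thesis
    using that \<rho> by blast
qed

lemma obstacle_problem_solvable:
  assumes m: "m > 0" and \<beta>: "0 \<le> \<beta>" "\<beta> < 1/2"
    and U: "\<And>x. x \<in> tnodes m \<Longrightarrow> avg_op m \<beta> U x = h x" and Uf: "boundary_val m U f"
    and VU: "\<And>x. x \<in> tnodes m \<Longrightarrow> K \<le> length x \<Longrightarrow> V x < U x"
  obtains u where "\<And>x. x \<in> tnodes m \<Longrightarrow> max (- avg_op m \<beta> u x + h x) (V x - u x) = 0"
    and "boundary_val m u f" and "\<And>x. x \<in> tnodes m \<Longrightarrow> U x \<le> u x"
proof -
  obtain t \<rho> where "0 < \<rho>" "\<rho> < 1"
    and B: "(\<lambda>x. U x + t * \<rho> ^ length x) \<in> supersolutions_above m \<beta> h (\<lambda>x. max (U x) (V x))"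
    using barrier_in_supersolutions_above[OF m \<beta> U VU] by blast
  have "\<beta> \<le> 1"
    using \<beta> by simp
  obtain u where u: "u \<in> supersolutions_above m \<beta> h (\<lambda>x. max (U x) (V x))"
    and least: "\<forall>w\<in>supersolutions_above m \<beta> h (\<lambda>x. max (U x) (V x)). \<forall>x\<in>tnodes m. u x \<le> w x"
    using ex_least_supersolution_above[OF \<beta>(1) \<open>\<beta> \<le> 1\<close> B] by blast
  have comp: "max (- avg_op m \<beta> u x + h x) (V x - u x) = 0" if "x \<in> tnodes m" for x
    using least_supersolution_complementarity[where U = U and V = V, OF \<beta>(1) \<open>\<beta> \<le> 1\<close> U u least that] .
  have bounds: "U x \<le> u x \<and> u x \<le> U x + t * \<rho> ^ length x" if x: "x \<in> tnodes m" for x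
    using u bspec[OF bspec[OF least B] x] x by (simp add: supersolutions_above_def)
  have "boundary_val m u f"
  proof (rule boundary_val_approx[OF Uf])
    show "\<bar>u x - U x\<bar> \<le> t * \<rho> ^ length x" if "x \<in> tnodes m" for x
      using bounds[OF that] by simp
    show "(\<lambda>k. t * \<rho> ^ k) \<longlonglongrightarrow> 0"
      using \<open>0 < \<rho>\<close> \<open>\<rho> < 1\<close> by (intro tendsto_mult_right_zero LIMSEQ_power_zero) auto
  qed
  then show thesis
    using that comp bounds by blast
qed

theorem theorem1p1:
  fixes m :: nat and \<beta>1 \<beta>2 :: real and h1 h2 :: "nat list \<Rightarrow> real" and f g :: "real \<Rightarrow> real"
  assumes "m \<ge> 2"
    and "0 \<le> \<beta>1" "\<beta>1 < 1/2" "0 \<le> \<beta>2" "\<beta>2 < 1/2"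
    and "continuous_on {0..1} f" "continuous_on {0..1} g"
    and "\<forall>s\<in>{0..1}. f s > g s"
    and "\<forall>x\<in>tnodes m. S_conv m \<beta>1 h1 x"
    and "\<forall>x\<in>tnodes m. S_conv m \<beta>2 h2 x"
    and "(\<lambda>k. Sup {\<bar>\<Sum>j=1..k. (\<beta>1 / (1 - \<beta>1)) ^ (k - j) * S_op m \<beta>1 h1 (anc x j)\<bar> | x.
                    x \<in> tnodes m \<and> length x = k}) \<longlonglongrightarrow> 0"
    and "(\<lambda>k. Sup {\<bar>\<Sum>j=1..k. (\<beta>2 / (1 - \<beta>2)) ^ (k - j) * S_op m \<beta>2 h2 (anc x j)\<bar> | x.
                    x \<in> tnodes m \<and> length x = k}) \<longlonglongrightarrow> 0"
  shows "\<exists>u v :: nat list \<Rightarrow> real.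
           (\<forall>x\<in>tnodes m.
              max (- avg_op m \<beta>1 u x + h1 x) (v x - u x) = 0 \<and>
              min (- avg_op m \<beta>2 v x + h2 x) (u x - v x) = 0) \<and>
           boundary_val m u f \<and> boundary_val m v g \<and>
           finite {x\<in>tnodes m. u x = v x}"
proof -
  obtain U where U: "\<And>x. x \<in> tnodes m \<Longrightarrow> avg_op m \<beta>1 U x = h1 x" and Uf: "boundary_val m U f"
    using dirichlet_problem_solvable[OF assms(1,2,3,6,9,11)] by blast
  obtain V where V: "\<And>x. x \<in> tnodes m \<Longrightarrow> avg_op m \<beta>2 V x = h2 x" and Vg: "boundary_val m V g"
    using dirichlet_problem_solvable[OF assms(1,4,5,7,10,12)] by blast
  obtain K where VU: "\<And>x. x \<in> tnodes m \<Longrightarrow> K \<le> length x \<Longrightarrow> V x < U x"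
    using boundary_val_eventually_less[OF assms(1,6,7,8) Uf Vg] by blast
  obtain u where u: "\<And>x. x \<in> tnodes m \<Longrightarrow> max (- avg_op m \<beta>1 u x + h1 x) (V x - u x) = 0"
    and uf: "boundary_val m u f" and Uu: "\<And>x. x \<in> tnodes m \<Longrightarrow> U x \<le> u x"
    using obstacle_problem_solvable[OF _ assms(2,3) U Uf VU] assms(1) by auto
  have v: "min (- avg_op m \<beta>2 V x + h2 x) (u x - V x) = 0" if "x \<in> tnodes m" for x
    using u[OF that] V[OF that] by simp
  have "{x \<in> tnodes m. u x = V x} \<subseteq> {x \<in> tnodes m. length x < K}"
    using VU Uu by force
  then have "finite {x \<in> tnodes m. u x = V x}"
    using finite_subset finite_tnodes_below by blast
  then show ?thesis
    using u v uf Vg by blast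
qed

end
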